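(* Let $R\subset\mathbb N$ be such that for every minimal distal system $(X,T)$ and every $x\in X$ one has $\inf_{n\in R} d(T^nx,x)=0$. Then for every minimal distal system $(X,T)$, every $x\in X$ and every $\ell\ge1$ one has $\inf_{n\in R}\max_{1\le j\le\ell} d(T^{jn}x,x)=0$.
   Context: A system is a compact metric space $X$ with a homeomorphism $T$; minimal means no proper nonempty closed invariant subset. It is distal if $\inf_{n\in\mathbb Z} d(T^nx,T^nx')>0$ for all $x\ne x'$. *)

theory Defs
  imports "HOL-Analysis.Analysis"
begin

definition iter_int :: "'a set \<Rightarrow> ('a \<Rightarrow> 'a) \<Rightarrow> int \<Rightarrow> 'a \<Rightarrow> 'a" where
  "iter_int X T n x = (if 0 \<le> n then (T ^^ nat n) x else (inv_into X T ^^ nat (- n)) x)"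

definition is_system :: "'a::metric_space set \<Rightarrow> ('a \<Rightarrow> 'a) \<Rightarrow> bool" where
  "is_system X T \<longleftrightarrow> compact X \<and> X \<noteq> {} \<and> (\<exists>S. homeomorphism X X T S)"

definition minimal_system :: "'a::metric_space set \<Rightarrow> ('a \<Rightarrow> 'a) \<Rightarrow> bool" where
  "minimal_system X T \<longleftrightarrow> is_system X T \<and>
     (\<forall>Y. Y \<subseteq> X \<and> Y \<noteq> {} \<and> closed Y \<and> T ` Y = Y \<longrightarrow> Y = X)"

definition distal_system :: "'a::metric_space set \<Rightarrow> ('a \<Rightarrow> 'a) \<Rightarrow> bool" where
  "distal_system X T \<longleftrightarrow> is_system X T \<and>
     (\<forall>x\<in>X. \<forall>x'\<in>X. x \<noteq> x' \<longrightarrow>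
        (\<exists>e>0. \<forall>n::int. e \<le> dist (iter_int X T n x) (iter_int X T n x')))"

definition minimal_distal_system :: "'a::metric_space set \<Rightarrow> ('a \<Rightarrow> 'a) \<Rightarrow> bool" where
  "minimal_distal_system X T \<longleftrightarrow> minimal_system X T \<and> distal_system X T"

end

theory Submission
  imports Defs
begin

(*
  Take the product over all j of the systems (X, T^j), a distal system on the metric space
  nat => 'a (countable products of metric spaces are metrised in Function_Metric). In a distal
  system every orbit closure is minimal, so the orbit closure of the diagonal point
  (x, x, ...) is a minimal distal system, and its recurrence along R is simultaneous
  recurrence of x along the multiples jn. The hypothesis is only available for systems in
  nat => real, but every compact metric space embeds there via y |-> (dist y (q i))_i for a
  dense sequence q, and distality and recurrence transfer along the embedding.
  Minimality of orbit closures is the Ellis semigroup argument: an idempotent of the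
  enveloping semigroup is injective by distality, hence the identity.
*)

section \<open>Compact semigroups of maps\<close>

lemma compact_PiE_UNIV:
  fixes K :: "'i \<Rightarrow> 'a::topological_space set"
  assumes "\<And>i. compact (K i)"
  shows "compact (PiE UNIV K)"
proof -
  have "compactin (product_topology (\<lambda>_. euclidean) UNIV) (PiE UNIV K)"
    using assms by (simp add: compactin_PiE compactin_euclidean_iff)
  then show ?thesis
    by (simp add: euclidean_product_topology compactin_euclidean_iff)
qed

lemma compact_imp_closed_fun:
  fixes S :: "('a \<Rightarrow> 'b::metric_space) set"
  assumes "compact S"
  shows "closed S"
proof -
  have "Hausdorff_space (product_topology (\<lambda>_. euclidean :: 'b topology) (UNIV :: 'a set))"
    by (simp add: Hausdorff_space_product_topology)
  then have "Hausdorff_space (euclidean :: ('a \<Rightarrow> 'b) topology)"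
    by (simp add: euclidean_product_topology)
  then show ?thesis
    using assms by (metis closed_closedin compactin_euclidean_iff compactin_imp_closedin)
qed

lemma continuous_on_eval: "continuous_on S (\<lambda>f. f y)"
  by (rule continuous_on_subset[OF continuous_on_product_coordinates]) simp

lemma continuous_on_comp_right: "continuous_on S (\<lambda>f. f \<circ> g)"
  by (intro continuous_on_coordinatewise_then_product) (simp add: o_def continuous_on_eval)

definition comp_closed :: "('a \<Rightarrow> 'a) set \<Rightarrow> bool" where
  "comp_closed A \<longleftrightarrow> (\<forall>a\<in>A. \<forall>b\<in>A. a \<circ> b \<in> A)"

lemma compact_chain_Inter_nonempty:
  assumes "compact S" "\<C> \<noteq> {}" and \<C>: "\<And>A. A \<in> \<C> \<Longrightarrow> closed A \<and> A \<noteq> {} \<and> A \<subseteq> S"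
    and total: "\<And>A B. A \<in> \<C> \<Longrightarrow> B \<in> \<C> \<Longrightarrow> A \<subseteq> B \<or> B \<subseteq> A"
  shows "\<Inter>\<C> \<noteq> {}"
proof -
  have "S \<inter> \<Inter>\<C> \<noteq> {}"
  proof (rule compact_imp_fip[OF assms(1)])
    show "closed A" if "A \<in> \<C>" for A
      using \<C>[OF that] by blast
    show "S \<inter> \<Inter>\<F> \<noteq> {}" if "finite \<F>" "\<F> \<subseteq> \<C>" for \<F>
    proof (cases "\<F> = {}")
      case False
      moreover have "subset.chain \<F> \<F>"
        unfolding subset_chain_def using total that(2) by (meson subsetD order_refl)
      ultimately have "\<Inter>\<F> \<in> \<F>"
        by (rule Inter_in_chain[OF \<open>finite \<F>\<close>])
      then have "\<Inter>\<F> \<noteq> {} \<and> \<Inter>\<F> \<subseteq> S"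
        using \<C> that(2) by (meson subsetD)
      then show ?thesis
        by (simp add: Int_absorb1)
    qed (use assms in auto)
  qed
  then show ?thesis
    by blast
qed

lemma minimal_closed_subsemigroup_exists:
  fixes S :: "('a::metric_space \<Rightarrow> 'a) set"
  assumes "compact S" "S \<noteq> {}" "comp_closed S"
  obtains A where "A \<subseteq> S" "A \<noteq> {}" "closed A" "comp_closed A"
    "\<And>B. B \<subseteq> A \<Longrightarrow> B \<noteq> {} \<Longrightarrow> closed B \<Longrightarrow> comp_closed B \<Longrightarrow> B = A"
proof -
  define \<A> where "\<A> = {A. A \<subseteq> S \<and> A \<noteq> {} \<and> closed A \<and> comp_closed A}"
  have "\<exists>M\<in>\<A>. \<forall>A\<in>\<A>. A \<subseteq> M \<longrightarrow> A = M"
  proof (rule predicate_Zorn[where P = "\<lambda>A B. B \<subseteq> A"])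
    show "partial_order_on \<A> (relation_of (\<lambda>A B. B \<subseteq> A) \<A>)"
      by (auto simp: partial_order_on_def preorder_on_def refl_on_def antisym_def trans_def
          relation_of_def)
    fix \<C> assume "\<C> \<in> Chains (relation_of (\<lambda>A B. B \<subseteq> A) \<A>)"
    then have "subset.chain \<A> \<C>"
      by (auto simp: Chains_def relation_of_def subset_chain_def)
    then have \<C>: "\<C> \<subseteq> \<A>" and total: "\<forall>A\<in>\<C>. \<forall>B\<in>\<C>. A \<subseteq> B \<or> B \<subseteq> A"
      by (simp_all add: subset_chain_def)
    show "\<exists>M\<in>\<A>. \<forall>A\<in>\<C>. M \<subseteq> A"
    proof (cases "\<C> = {}")
      case True
      then show ?thesis
        using assms by (auto simp: \<A>_def compact_imp_closed_fun)
    next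
      case False
      have "\<Inter>\<C> \<noteq> {}"
        by (rule compact_chain_Inter_nonempty[OF assms(1) False])
          (use \<C> total in \<open>auto simp: \<A>_def\<close>)
      moreover have "\<Inter>\<C> \<subseteq> S" "closed (\<Inter>\<C>)" "comp_closed (\<Inter>\<C>)"
        using False \<C> unfolding \<A>_def comp_closed_def by blast+
      ultimately have "\<Inter>\<C> \<in> \<A>"
        unfolding \<A>_def by blast
      then show ?thesis
        by blast
    qed
  qed
  then obtain M where "M \<in> \<A>" and "\<forall>A\<in>\<A>. A \<subseteq> M \<longrightarrow> A = M"
    by blast
  then show ?thesis
    by (intro that[of M]) (auto simp: \<A>_def)
qed

text \<open>The Ellis--Numakura lemma; only continuity of right composition is used.\<close>
lemma comp_closed_idempotent_exists:
  fixes S :: "('a::metric_space \<Rightarrow> 'a) set"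
  assumes "compact S" "S \<noteq> {}" "comp_closed S"
  obtains u where "u \<in> S" "u \<circ> u = u"
proof -
  obtain A where A: "A \<subseteq> S" "A \<noteq> {}" "closed A" "comp_closed A"
    and minimal: "\<And>B. B \<subseteq> A \<Longrightarrow> B \<noteq> {} \<Longrightarrow> closed B \<Longrightarrow> comp_closed B \<Longrightarrow> B = A"
    using minimal_closed_subsemigroup_exists[OF assms] by blast
  obtain a where a: "a \<in> A"
    using A(2) by blast
  have AA: "f \<circ> g \<in> A" if "f \<in> A" "g \<in> A" for f g
    using A(4) that by (simp add: comp_closed_def)
  have "(\<lambda>f. f \<circ> a) ` A = A"
  proof (rule minimal)
    have "compact A"
      using A(1,3) assms(1) by (metis compact_Int_closed inf.absorb2)
    then show "closed ((\<lambda>f. f \<circ> a) ` A)"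
      by (intro compact_imp_closed_fun compact_continuous_image continuous_on_comp_right)
    show "comp_closed ((\<lambda>f. f \<circ> a) ` A)"
      unfolding comp_closed_def
    proof clarify
      fix f g assume "f \<in> A" "g \<in> A"
      then have "f \<circ> a \<circ> g \<in> A"
        using AA a by blast
      then show "(f \<circ> a) \<circ> (g \<circ> a) \<in> (\<lambda>f. f \<circ> a) ` A"
        by (rule image_eqI[rotated]) (simp add: comp_assoc)
    qed
  qed (use A(2) AA a in auto)
  then obtain b where "b \<in> A" "b \<circ> a = a"
    using a by (metis imageE)
  have "{f \<in> A. f \<circ> a = a} = A"
  proof (rule minimal)
    have "{f \<in> A. f \<circ> a = a} = A \<inter> (\<Inter>y. {f. f (a y) = a y})"
      by (auto simp: fun_eq_iff)
    then show "closed {f \<in> A. f \<circ> a = a}"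
      by (simp add: closed_Int closed_INT closed_Collect_eq continuous_on_eval A(3))
    show "comp_closed {f \<in> A. f \<circ> a = a}"
      using AA by (simp add: comp_closed_def comp_assoc)
  qed (use \<open>b \<in> A\<close> \<open>b \<circ> a = a\<close> in auto)
  then show ?thesis
    using that a A(1) by blast
qed

section \<open>Orbit closures and the enveloping semigroup\<close>

definition orbit_closure :: "('a::topological_space \<Rightarrow> 'a) \<Rightarrow> 'a \<Rightarrow> 'a set" where
  "orbit_closure U x = closure (range (\<lambda>n. (U ^^ n) x))"

lemma funpow_in_invariant: "U ` Y \<subseteq> Y \<Longrightarrow> y \<in> Y \<Longrightarrow> (U ^^ n) y \<in> Y"
  by (induction n) auto

lemma self_in_orbit_closure: "x \<in> orbit_closure U x"
proof -
  have "x \<in> range (\<lambda>n. (U ^^ n) x)"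
    by (rule range_eqI[of _ _ 0]) simp
  then show ?thesis
    unfolding orbit_closure_def by (rule closure_subset[THEN subsetD])
qed

lemma orbit_closure_subset:
  assumes "closed Y" "U ` Y \<subseteq> Y" "y \<in> Y"
  shows "orbit_closure U y \<subseteq> Y"
proof -
  have "range (\<lambda>n. (U ^^ n) y) \<subseteq> Y"
    using funpow_in_invariant[OF assms(2,3)] by blast
  then show ?thesis
    unfolding orbit_closure_def using assms(1) by (rule closure_minimal)
qed

lemma orbit_closure_invariant:
  assumes "continuous_on (orbit_closure U x) U"
  shows "U ` orbit_closure U x \<subseteq> orbit_closure U x"
  unfolding orbit_closure_def
proof (rule image_closure_subset)
  have "U ((U ^^ n) x) \<in> range (\<lambda>n. (U ^^ n) x)" for n
    using rangeI[of "\<lambda>n. (U ^^ n) x" "Suc n"] by simp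
  then show "U ` range (\<lambda>n. (U ^^ n) x) \<subseteq> closure (range (\<lambda>n. (U ^^ n) x))"
    using closure_subset by fastforce
qed (use assms in \<open>simp_all add: orbit_closure_def\<close>)

locale compact_dynamical_system =
  fixes Z :: "'a::metric_space set" and U :: "'a \<Rightarrow> 'a"
  assumes compact: "compact Z" and continuous: "continuous_on Z U" and maps_to: "U ` Z \<subseteq> Z"
begin

text \<open>The map is extended by the identity off \<open>Z\<close>, so that the enveloping semigroup lies
  in the compact product \<open>\<Pi>\<^sub>E y. if y \<in> Z then Z else {y}\<close>.\<close>

definition extended_map :: "'a \<Rightarrow> 'a" where
  "extended_map y = (if y \<in> Z then U y else y)"

definition enveloping_semigroup :: "('a \<Rightarrow> 'a) set" where
  "enveloping_semigroup = closure (range (\<lambda>n. extended_map ^^ n))"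

lemma funpow_extended_map: "(extended_map ^^ n) y = (if y \<in> Z then (U ^^ n) y else y)"
  by (induction n) (simp_all add: extended_map_def funpow_in_invariant[OF maps_to])

lemma continuous_on_funpow: "continuous_on Z (U ^^ n)"
proof (induction n)
  case (Suc n)
  have "(U ^^ n) ` Z \<subseteq> Z"
    using funpow_in_invariant[OF maps_to] by blast
  then show ?case
    using continuous_on_compose[OF Suc continuous_on_subset[OF continuous]] by simp
qed (simp add: continuous_on_id)

lemma compact_box: "compact (PiE UNIV (\<lambda>y. if y \<in> Z then Z else {y}))"
  using compact by (intro compact_PiE_UNIV) simp

lemma enveloping_semigroup_subset:
  "enveloping_semigroup \<subseteq> PiE UNIV (\<lambda>y. if y \<in> Z then Z else {y})"
  unfolding enveloping_semigroup_def
proof (rule closure_minimal)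
  have "extended_map ^^ n \<in> PiE UNIV (\<lambda>y. if y \<in> Z then Z else {y})" for n
    using funpow_in_invariant[OF maps_to] by (simp add: PiE_iff funpow_extended_map)
  then show "range (\<lambda>n. extended_map ^^ n) \<subseteq> PiE UNIV (\<lambda>y. if y \<in> Z then Z else {y})"
    by blast
qed (rule compact_imp_closed_fun[OF compact_box])

lemma enveloping_semigroup_maps_to: "f \<in> enveloping_semigroup \<Longrightarrow> y \<in> Z \<Longrightarrow> f y \<in> Z"
  using PiE_mem[OF subsetD[OF enveloping_semigroup_subset] UNIV_I, of f y] by simp

lemma enveloping_semigroup_fixes: "f \<in> enveloping_semigroup \<Longrightarrow> y \<notin> Z \<Longrightarrow> f y = y"
  using PiE_mem[OF subsetD[OF enveloping_semigroup_subset] UNIV_I, of f y] by simp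

lemma funpow_extended_map_in_enveloping_semigroup: "extended_map ^^ n \<in> enveloping_semigroup"
  unfolding enveloping_semigroup_def by (rule closure_subset[THEN subsetD]) (rule rangeI)

lemma compact_enveloping_semigroup: "compact enveloping_semigroup"
proof -
  have "compact (PiE UNIV (\<lambda>y. if y \<in> Z then Z else {y}) \<inter> enveloping_semigroup)"
    by (rule compact_Int_closed[OF compact_box]) (simp add: enveloping_semigroup_def)
  then show ?thesis
    by (simp add: Int_absorb1 enveloping_semigroup_subset)
qed

text \<open>Right composition is always continuous; left composition is continuous only by the
  iterates, which suffices to close the semigroup up in two steps.\<close>
lemma comp_closed_enveloping_semigroup: "comp_closed enveloping_semigroup"
proof -
  have left: "extended_map ^^ n \<circ> g \<in> enveloping_semigroup" if g: "g \<in> enveloping_semigroup" for n g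
  proof -
    have "continuous_on enveloping_semigroup (\<lambda>g. extended_map ^^ n \<circ> g)"
    proof (intro continuous_on_coordinatewise_then_product)
      fix y
      have "(extended_map ^^ n \<circ> g) y = (if y \<in> Z then (U ^^ n) (g y) else y)"
        if "g \<in> enveloping_semigroup" for g
        using enveloping_semigroup_maps_to[OF that] enveloping_semigroup_fixes[OF that]
        by (simp add: funpow_extended_map)
      moreover have "continuous_on enveloping_semigroup (\<lambda>g. (U ^^ n) (g y))" if "y \<in> Z"
        using enveloping_semigroup_maps_to that
        by (intro continuous_on_compose2[OF continuous_on_funpow continuous_on_eval]) auto
      then have "continuous_on enveloping_semigroup
          (\<lambda>g. if y \<in> Z then (U ^^ n) (g y) else y)"
        by (cases "y \<in> Z") simp_all
      ultimately show "continuous_on enveloping_semigroup (\<lambda>g. (extended_map ^^ n \<circ> g) y)"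
        by (subst continuous_on_cong[OF refl]) auto
    qed
    moreover have "(\<lambda>g. extended_map ^^ n \<circ> g) ` range (\<lambda>m. extended_map ^^ m) \<subseteq> enveloping_semigroup"
      using funpow_extended_map_in_enveloping_semigroup by (auto simp flip: funpow_add)
    ultimately have "(\<lambda>g. extended_map ^^ n \<circ> g) ` enveloping_semigroup \<subseteq> enveloping_semigroup"
      unfolding enveloping_semigroup_def by (rule image_closure_subset[OF _ closed_closure])
    then show ?thesis
      using g by blast
  qed
  show ?thesis
    unfolding comp_closed_def
  proof clarify
    fix f g assume f: "f \<in> enveloping_semigroup" and g: "g \<in> enveloping_semigroup"
    have "(\<lambda>f. f \<circ> g) ` range (\<lambda>m. extended_map ^^ m) \<subseteq> enveloping_semigroup"
      using left[OF g] by blast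
    then have "(\<lambda>f. f \<circ> g) ` enveloping_semigroup \<subseteq> enveloping_semigroup"
      unfolding enveloping_semigroup_def
      by (rule image_closure_subset[OF continuous_on_comp_right closed_closure])
    then show "f \<circ> g \<in> enveloping_semigroup"
      using f by blast
  qed
qed

lemma orbit_closure_eq_evaluations:
  assumes "w \<in> Z"
  shows "orbit_closure U w = (\<lambda>f. f w) ` enveloping_semigroup"
proof
  have "(U ^^ n) w = (extended_map ^^ n) w" for n
    using assms by (simp add: funpow_extended_map)
  then have "range (\<lambda>n. (U ^^ n) w) \<subseteq> (\<lambda>f. f w) ` enveloping_semigroup"
    using funpow_extended_map_in_enveloping_semigroup by blast
  moreover have "closed ((\<lambda>f. f w) ` enveloping_semigroup)"
    by (intro compact_imp_closed compact_continuous_image continuous_on_eval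
        compact_enveloping_semigroup)
  ultimately show "orbit_closure U w \<subseteq> (\<lambda>f. f w) ` enveloping_semigroup"
    unfolding orbit_closure_def by (rule closure_minimal)
  have "(\<lambda>f. f w) ` range (\<lambda>m. extended_map ^^ m) \<subseteq> range (\<lambda>n. (U ^^ n) w)"
    using assms by (auto simp: funpow_extended_map)
  also have "\<dots> \<subseteq> orbit_closure U w"
    unfolding orbit_closure_def by (rule closure_subset)
  finally show "(\<lambda>f. f w) ` enveloping_semigroup \<subseteq> orbit_closure U w"
    unfolding enveloping_semigroup_def orbit_closure_def
    by (rule image_closure_subset[OF continuous_on_eval closed_closure])
qed

end

locale forward_distal_system = compact_dynamical_system +
  assumes distal: "\<And>a b. a \<in> Z \<Longrightarrow> b \<in> Z \<Longrightarrow> a \<noteq> b \<Longrightarrow>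
    \<exists>e>0. \<forall>n. e \<le> dist ((U ^^ n) a) ((U ^^ n) b)"
begin

lemma inj_on_enveloping_semigroup:
  assumes "u \<in> enveloping_semigroup"
  shows "inj_on u Z"
proof
  fix a b assume ab: "a \<in> Z" "b \<in> Z" "u a = u b"
  show "a = b"
  proof (rule ccontr)
    assume "a \<noteq> b"
    then obtain e where e: "e > 0" "\<And>n. e \<le> dist ((U ^^ n) a) ((U ^^ n) b)"
      using distal ab by blast
    define N where "N = (\<lambda>f. f a) -` ball (u a) (e/2) \<inter> (\<lambda>f. f b) -` ball (u b) (e/2)"
    have "open N"
      unfolding N_def by (intro open_Int open_vimage open_ball continuous_on_product_coordinates)
    moreover have "u \<in> N"
      unfolding N_def using e by auto
    ultimately have "range (\<lambda>n. extended_map ^^ n) \<inter> N \<noteq> {}"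
      using assms unfolding enveloping_semigroup_def closure_iff_nhds_not_empty
      by (meson order_refl)
    then obtain n where "extended_map ^^ n \<in> N"
      by blast
    then have "dist (u a) ((U ^^ n) a) < e/2" "dist (u b) ((U ^^ n) b) < e/2"
      unfolding N_def using ab by (auto simp: funpow_extended_map)
    then have "dist ((U ^^ n) a) ((U ^^ n) b) < e"
      using ab(3) by (metis dist_commute dist_triangle_half_l)
    then show False
      using e(2)[of n] by simp
  qed
qed

text \<open>An idempotent of the enveloping semigroup that is injective on \<open>Z\<close> is the identity
  there; finding one in the left ideal generated by \<open>g\<close> with \<open>g w = z\<close> inverts \<open>g\<close> at \<open>w\<close>.\<close>
lemma orbit_closure_sym:
  assumes "w \<in> Z" "z \<in> orbit_closure U w"
  shows "w \<in> orbit_closure U z"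
proof -
  obtain g where g: "g \<in> enveloping_semigroup" "g w = z"
    using assms orbit_closure_eq_evaluations by auto
  have "compact ((\<lambda>f. f \<circ> g) ` enveloping_semigroup)"
    by (intro compact_continuous_image continuous_on_comp_right compact_enveloping_semigroup)
  moreover have "comp_closed ((\<lambda>f. f \<circ> g) ` enveloping_semigroup)"
    unfolding comp_closed_def
  proof clarify
    fix a b assume "a \<in> enveloping_semigroup" "b \<in> enveloping_semigroup"
    then have "a \<circ> g \<circ> b \<in> enveloping_semigroup"
      using g(1) comp_closed_enveloping_semigroup by (simp add: comp_closed_def)
    then show "(a \<circ> g) \<circ> (b \<circ> g) \<in> (\<lambda>f. f \<circ> g) ` enveloping_semigroup"
      by (rule image_eqI[rotated]) (simp add: comp_assoc)
  qed
  ultimately obtain u where u: "u \<in> (\<lambda>f. f \<circ> g) ` enveloping_semigroup" "u \<circ> u = u"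
    using comp_closed_idempotent_exists g(1) by blast
  then obtain h where h: "h \<in> enveloping_semigroup" "u = h \<circ> g"
    by blast
  have "u \<in> enveloping_semigroup"
    using h g(1) comp_closed_enveloping_semigroup by (simp add: comp_closed_def)
  have "u (h (g w)) = u w"
    using u(2) h(2) by (metis comp_apply)
  then have "h z = w"
    using inj_onD[OF inj_on_enveloping_semigroup[OF \<open>u \<in> enveloping_semigroup\<close>]] assms(1)
      enveloping_semigroup_maps_to h(1) g by (metis comp_apply)
  moreover have "z \<in> Z"
    using assms orbit_closure_subset[OF compact_imp_closed[OF compact] maps_to] by blast
  ultimately show ?thesis
    using h(1) orbit_closure_eq_evaluations by blast
qed

end

section \<open>Integer iterates and systems\<close>

lemma funpow_semiconj:
  assumes "\<And>a. a \<in> A \<Longrightarrow> h (F a) = G (h a)" "F ` A \<subseteq> A" "a \<in> A"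
  shows "h ((F ^^ k) a) = (G ^^ k) (h a)"
  using assms(3) by (induction k) (simp_all add: assms(1) funpow_in_invariant[OF assms(2)])

lemma homeomorphism_funpow:
  assumes "homeomorphism X X T g"
  shows "homeomorphism X X (T ^^ n) (g ^^ n)"
proof (induction n)
  case 0
  then show ?case
    by (simp add: homeomorphism_def)
next
  case (Suc n)
  show ?case
    using homeomorphism_compose[OF Suc assms] by (metis funpow.simps(2) funpow_Suc_right)
qed

lemma iter_int_homeomorphism:
  assumes "homeomorphism X X T g" "y \<in> X"
  shows "iter_int X T n y = (if 0 \<le> n then (T ^^ nat n) y else (g ^^ nat (- n)) y)"
proof -
  have inv: "inv_into X T z = g z" if "z \<in> X" for z
    using assms(1) that unfolding homeomorphism_def
    by (metis image_eqI inv_into_f_eq inj_on_inverseI)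
  have "g ` X \<subseteq> X"
    using assms(1) by (simp add: homeomorphism_def)
  then have "(inv_into X T ^^ k) y = (g ^^ k) y \<and> (g ^^ k) y \<in> X" for k
    by (induction k) (use assms(2) inv in auto)
  then show ?thesis
    by (simp add: iter_int_def)
qed

lemma iter_int_in:
  assumes "homeomorphism X X T g" "y \<in> X"
  shows "iter_int X T n y \<in> X"
proof -
  have "T ` X \<subseteq> X" "g ` X \<subseteq> X"
    using assms(1) by (simp_all add: homeomorphism_def)
  then show ?thesis
    using funpow_in_invariant[OF _ assms(2)] by (simp add: iter_int_homeomorphism[OF assms])
qed

lemma iter_int_funpow:
  assumes "homeomorphism X X T g" "y \<in> X"
  shows "iter_int X (T ^^ j) n y = iter_int X T (int j * n) y"
proof -
  have "iter_int X (T ^^ j) n y =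
      (if 0 \<le> n then (T ^^ (j * nat n)) y else (g ^^ (j * nat (- n))) y)"
    using iter_int_homeomorphism[OF homeomorphism_funpow[OF assms(1)] assms(2)]
    by (simp add: funpow_mult)
  moreover have "iter_int X T (int j * n) y =
      (if 0 \<le> n then (T ^^ (j * nat n)) y else (g ^^ (j * nat (- n))) y)"
  proof (cases "j = 0")
    case False
    then have "0 \<le> int j * n \<longleftrightarrow> 0 \<le> n" "nat (- (int j * n)) = j * nat (- n)"
      by (simp_all add: zero_le_mult_iff nat_mult_distrib flip: mult_minus_right)
    then show ?thesis
      by (simp add: iter_int_homeomorphism[OF assms] nat_mult_distrib)
  qed (simp add: iter_int_homeomorphism[OF assms])
  ultimately show ?thesis
    by simp
qed

lemma iter_int_semiconj:
  assumes A: "homeomorphism A A TA gA" and B: "homeomorphism B B TB gB"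
    and maps: "h ` A \<subseteq> B" and semiconj: "\<And>a. a \<in> A \<Longrightarrow> h (TA a) = TB (h a)"
    and "a \<in> A"
  shows "h (iter_int A TA n a) = iter_int B TB n (h a)"
proof -
  have "h (gA a) = gB (h a)" if "a \<in> A" for a
  proof -
    have "gA a \<in> A" "TA (gA a) = a"
      using A that by (auto simp: homeomorphism_def)
    then have "TB (h (gA a)) = h a"
      using semiconj by metis
    then show ?thesis
      using B maps \<open>gA a \<in> A\<close> by (metis homeomorphism_apply1 image_subset_iff)
  qed
  moreover have "TA ` A \<subseteq> A" "gA ` A \<subseteq> A"
    using A by (simp_all add: homeomorphism_def)
  ultimately show ?thesis
    using funpow_semiconj[of A h TA TB] funpow_semiconj[of A h gA gB] semiconj \<open>a \<in> A\<close> maps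
    by (simp add: iter_int_homeomorphism[OF A] iter_int_homeomorphism[OF B] image_subset_iff)
qed

lemma is_system_iff:
  "is_system X T \<longleftrightarrow> compact X \<and> X \<noteq> {} \<and> continuous_on X T \<and> T ` X = X \<and> inj_on T X"
  unfolding is_system_def
  by (metis homeomorphism_compact homeomorphism_def inj_on_inverseI)

lemma is_system_homeomorphism:
  assumes "is_system X T"
  obtains g where "homeomorphism X X T g"
  using assms by (auto simp: is_system_def)

lemma is_system_subsystem:
  assumes "is_system X T" "Y \<subseteq> X" "closed Y" "Y \<noteq> {}" "T ` Y = Y"
  shows "is_system Y T"
proof -
  have "compact Y"
    using compact_Int_closed[of X Y] assms by (simp add: is_system_iff Int_absorb1)
  then show ?thesis
    using assms by (auto simp: is_system_iff intro: continuous_on_subset inj_on_subset)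
qed

lemma is_system_conjugate:
  assumes "is_system X T" "homeomorphism X Y h k"
  shows "is_system Y (h \<circ> T \<circ> k)"
proof -
  obtain g where "homeomorphism X X T g"
    using assms(1) by (rule is_system_homeomorphism)
  then have "homeomorphism Y Y (h \<circ> T \<circ> k) (h \<circ> g \<circ> k)"
    using homeomorphism_compose[OF homeomorphism_compose[OF homeomorphism_symD[OF assms(2)]]
        assms(2)]
    by (simp add: o_assoc)
  moreover have "compact Y" "Y \<noteq> {}"
    using assms compact_continuous_image[of X h]
    by (auto simp: is_system_iff homeomorphism_def)
  ultimately show ?thesis
    unfolding is_system_def by blast
qed

lemma is_system_funpow: "is_system X T \<Longrightarrow> is_system X (T ^^ n)"
  unfolding is_system_def by (metis homeomorphism_funpow)

lemma homeomorphism_PiE: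
  assumes "\<And>i. homeomorphism (X i) (Y i) (f i) (g i)"
  shows "homeomorphism (PiE UNIV X) (PiE UNIV Y) (\<lambda>x i. f i (x i)) (\<lambda>y i. g i (y i))"
proof -
  have "continuous_on (PiE UNIV A) (\<lambda>x i. F i (x i)) \<and>
      (\<lambda>x i. F i (x i)) ` PiE UNIV A \<subseteq> PiE UNIV B \<and>
      (\<forall>x\<in>PiE UNIV A. (\<lambda>i. G i (F i (x i))) = x)"
    if F: "\<And>i. homeomorphism (A i) (B i) (F i) (G i)" for A B F G
  proof (intro conjI ballI)
    have FA: "F i a \<in> B i" if "a \<in> A i" for i a
      using imageI[OF that, of "F i"] homeomorphism_image1[OF F, of i] by simp
    show "continuous_on (PiE UNIV A) (\<lambda>x i. F i (x i))"
    proof (intro continuous_on_coordinatewise_then_product)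
      fix i
      show "continuous_on (PiE UNIV A) (\<lambda>x. F i (x i))"
        using homeomorphism_cont1[OF F] continuous_on_eval
        by (rule continuous_on_compose2) (auto simp: PiE_iff)
    qed
    show "(\<lambda>x i. F i (x i)) ` PiE UNIV A \<subseteq> PiE UNIV B"
      using FA by (auto simp: PiE_iff)
    show "(\<lambda>i. G i (F i (x i))) = x" if "x \<in> PiE UNIV A" for x
      using homeomorphism_apply1[OF F] that by (auto simp: PiE_iff)
  qed
  from this[of X Y f g, OF assms] this[of Y X g f, OF homeomorphism_symD[OF assms]]
  show ?thesis
    by (intro homeomorphismI) auto
qed

lemma is_system_PiE:
  fixes X :: "'i::countable \<Rightarrow> 'a::metric_space set"
  assumes "\<And>i. is_system (X i) (T i)"
  shows "is_system (PiE UNIV X) (\<lambda>f i. T i (f i))"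
proof -
  have "\<forall>i. \<exists>g. homeomorphism (X i) (X i) (T i) g"
    using assms by (simp add: is_system_def)
  then obtain g where "\<And>i. homeomorphism (X i) (X i) (T i) (g i)"
    by metis
  moreover have "compact (PiE UNIV X)" "PiE UNIV X \<noteq> {}"
    using assms by (simp_all add: compact_PiE_UNIV is_system_iff PiE_eq_empty_iff)
  ultimately show ?thesis
    unfolding is_system_def by (blast intro: homeomorphism_PiE)
qed

section \<open>Distal systems\<close>

lemma distal_system_from_factors:
  fixes Z :: "'a::metric_space set" and Y :: "'i \<Rightarrow> 'b::metric_space set"
  assumes sys: "is_system Z V"
    and distal: "\<And>i. distal_system (Y i) (U i)"
    and cont: "\<And>i. continuous_on Z (h i)" and maps: "\<And>i. h i ` Z \<subseteq> Y i"
    and semiconj: "\<And>i z. z \<in> Z \<Longrightarrow> h i (V z) = U i (h i z)"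
    and separating: "\<And>z z'. z \<in> Z \<Longrightarrow> z' \<in> Z \<Longrightarrow> z \<noteq> z' \<Longrightarrow> \<exists>i. h i z \<noteq> h i z'"
  shows "distal_system Z V"
  unfolding distal_system_def
proof (intro conjI sys ballI impI)
  fix z z' assume zz: "z \<in> Z" "z' \<in> Z" "z \<noteq> z'"
  obtain i where hi: "h i z \<noteq> h i z'"
    using separating zz by blast
  obtain gV where gV: "homeomorphism Z Z V gV"
    using sys by (rule is_system_homeomorphism)
  obtain gU where gU: "homeomorphism (Y i) (Y i) (U i) gU"
    using distal[of i] by (auto simp: distal_system_def is_system_def)
  have iter: "h i (iter_int Z V n a) = iter_int (Y i) (U i) n (h i a)" if "a \<in> Z" for n a
    using iter_int_semiconj[OF gV gU maps semiconj that] by blast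
  obtain e where "e > 0"
    and e: "\<And>n. e \<le> dist (iter_int (Y i) (U i) n (h i z)) (iter_int (Y i) (U i) n (h i z'))"
    using distal[of i] maps zz hi unfolding distal_system_def by blast
  have "uniformly_continuous_on Z (h i)"
    using compact_uniformly_continuous[OF cont] sys by (simp add: is_system_iff)
  then obtain d where "d > 0"
    and d: "\<And>a b. a \<in> Z \<Longrightarrow> b \<in> Z \<Longrightarrow> dist a b < d \<Longrightarrow> dist (h i a) (h i b) < e"
    using \<open>e > 0\<close> unfolding uniformly_continuous_on_def by (metis dist_commute)
  have "d \<le> dist (iter_int Z V n z) (iter_int Z V n z')" for n
  proof (rule ccontr)
    assume "\<not> ?thesis"
    then have "dist (h i (iter_int Z V n z)) (h i (iter_int Z V n z')) < e"
      using d iter_int_in[OF gV] zz by simp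
    then show False
      using e[of n] iter zz by simp
  qed
  then show "\<exists>d>0. \<forall>n. d \<le> dist (iter_int Z V n z) (iter_int Z V n z')"
    using \<open>d > 0\<close> by blast
qed

lemma distal_system_subsystem:
  assumes "distal_system X T" "Y \<subseteq> X" "closed Y" "Y \<noteq> {}" "T ` Y = Y"
  shows "distal_system Y T"
proof (rule distal_system_from_factors[where h = "\<lambda>_::unit. id"])
  show "is_system Y T"
    using assms is_system_subsystem[of X T Y] by (simp add: distal_system_def)
qed (use assms in auto)

lemma distal_system_conjugate:
  assumes "distal_system X T" "homeomorphism X Y h k"
  shows "distal_system Y (h \<circ> T \<circ> k)"
proof (rule distal_system_from_factors[where h = "\<lambda>_::unit. k"])
  show "is_system Y (h \<circ> T \<circ> k)"
    using assms is_system_conjugate by (auto simp: distal_system_def)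
  have "T ` X \<subseteq> X"
    using assms(1) by (simp add: distal_system_def is_system_iff)
  moreover have "k y \<in> X" if "y \<in> Y" for y
    using homeomorphism_image2[OF assms(2)] that by blast
  ultimately show "k ((h \<circ> T \<circ> k) y) = T (k y)" if "y \<in> Y" for y
    using homeomorphism_apply1[OF assms(2)] that by auto
qed (use assms in \<open>auto simp: homeomorphism_def\<close>)

lemma distal_system_funpow:
  assumes "distal_system X T"
  shows "distal_system X (T ^^ j)"
proof -
  obtain g where g: "homeomorphism X X T g"
    using assms by (auto simp: distal_system_def is_system_def)
  show ?thesis
    using assms is_system_funpow unfolding distal_system_def
    by (simp add: iter_int_funpow[OF g]) blast
qed

lemma distal_system_PiE:
  fixes X :: "'i::countable \<Rightarrow> 'a::metric_space set"
  assumes "\<And>i. distal_system (X i) (T i)"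
  shows "distal_system (PiE UNIV X) (\<lambda>f i. T i (f i))"
proof (rule distal_system_from_factors[where h = "\<lambda>i f. f i"])
  show "is_system (PiE UNIV X) (\<lambda>f i. T i (f i))"
    using assms by (intro is_system_PiE) (simp add: distal_system_def)
qed (use assms continuous_on_eval in \<open>auto simp: PiE_iff fun_eq_iff\<close>)

lemma minimal_distal_system_orbit_closure:
  assumes "distal_system Z U" "w \<in> Z"
  shows "minimal_distal_system (orbit_closure U w) U"
proof -
  have sys: "is_system Z U"
    using assms(1) by (simp add: distal_system_def)
  interpret forward_distal_system Z U
  proof
    show "compact Z" "continuous_on Z U" "U ` Z \<subseteq> Z"
      using sys by (simp_all add: is_system_iff)
    show "\<exists>e>0. \<forall>n. e \<le> dist ((U ^^ n) a) ((U ^^ n) b)" if "a \<in> Z" "b \<in> Z" "a \<noteq> b" for a b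
      using assms(1) that unfolding distal_system_def
      by (metis iter_int_def of_nat_0_le_iff nat_int)
  qed
  define Orb where "Orb = orbit_closure U w"
  have "closed Z"
    by (rule compact_imp_closed[OF compact])
  then have "Orb \<subseteq> Z"
    unfolding Orb_def by (rule orbit_closure_subset[OF _ maps_to assms(2)])
  have "w \<in> Orb"
    unfolding Orb_def by (rule self_in_orbit_closure)
  have least: "Orb \<subseteq> Y" if Y: "Y \<subseteq> Orb" "Y \<noteq> {}" "closed Y" "U ` Y \<subseteq> Y" for Y
  proof -
    obtain z where "z \<in> Y"
      using Y(2) by blast
    then have "w \<in> orbit_closure U z"
      using orbit_closure_sym[OF assms(2)] Y(1) unfolding Orb_def by blast
    also have "\<dots> \<subseteq> Y"
      using orbit_closure_subset[OF Y(3,4) \<open>z \<in> Y\<close>] .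
    finally show ?thesis
      unfolding Orb_def using orbit_closure_subset[OF Y(3,4)] by blast
  qed
  have "closed Orb"
    by (simp add: Orb_def orbit_closure_def)
  then have "compact Orb"
    using compact_Int_closed[OF compact, of Orb] \<open>Orb \<subseteq> Z\<close> by (simp add: Int_absorb1)
  have "U ` Orb \<subseteq> Orb"
    unfolding Orb_def
    by (rule orbit_closure_invariant, rule continuous_on_subset[OF continuous \<open>Orb \<subseteq> Z\<close>[unfolded Orb_def]])
  moreover have "Orb \<subseteq> U ` Orb"
  proof (rule least)
    show "closed (U ` Orb)"
      by (intro compact_imp_closed compact_continuous_image continuous_on_subset[OF continuous]
          \<open>compact Orb\<close> \<open>Orb \<subseteq> Z\<close>)
  qed (use \<open>U ` Orb \<subseteq> Orb\<close> \<open>w \<in> Orb\<close> in auto)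
  ultimately have "U ` Orb = Orb"
    by blast
  have "is_system Orb U"
    using is_system_subsystem[OF sys \<open>Orb \<subseteq> Z\<close> \<open>closed Orb\<close>] \<open>U ` Orb = Orb\<close> \<open>w \<in> Orb\<close>
    by blast
  moreover have "distal_system Orb U"
    using distal_system_subsystem[OF assms(1) \<open>Orb \<subseteq> Z\<close> \<open>closed Orb\<close>] \<open>U ` Orb = Orb\<close>
      \<open>w \<in> Orb\<close>
    by blast
  ultimately show ?thesis
    unfolding minimal_distal_system_def minimal_system_def Orb_def[symmetric]
    using least by blast
qed

section \<open>Transfer from real sequence spaces\<close>

lemma compact_imp_dense_sequence:
  fixes Y :: "'a::metric_space set"
  assumes "compact Y"
  obtains q :: "nat \<Rightarrow> 'a" where "Y \<subseteq> closure (range q)"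
proof -
  have "\<forall>k::nat. \<exists>F. finite F \<and> Y \<subseteq> (\<Union>c\<in>F. ball c (1 / Suc k))"
    using assms unfolding compact_eq_totally_bounded by simp
  then obtain F where F: "\<And>k. finite (F k)" "\<And>k. Y \<subseteq> (\<Union>c\<in>F k. ball c (1 / Suc k))"
    by metis
  define q where "q = from_nat_into (\<Union>k. F k)"
  have "countable (\<Union>k. F k)"
    using F(1) by (intro countable_UN) (simp_all add: countable_finite)
  then have F_q: "F k \<subseteq> range q" for k
    unfolding q_def using subset_range_from_nat_into by blast
  have "y \<in> closure (range q)" if y: "y \<in> Y" for y
    unfolding closure_approachable
  proof (intro allI impI)
    fix e :: real assume "e > 0"
    then obtain k where k: "1 / Suc k < e"
      using nat_approx_posE by blast
    obtain c where "c \<in> F k" "dist c y < 1 / Suc k"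
      using F(2)[of k] y by auto
    then show "\<exists>c\<in>range q. dist c y < e"
      using F_q k by (meson less_trans subsetD)
  qed
  then show ?thesis
    using that by blast
qed

lemma compact_embeds_in_real_sequences:
  fixes Y :: "'a::metric_space set"
  assumes "compact Y"
  obtains \<Phi> :: "'a \<Rightarrow> nat \<Rightarrow> real" where "continuous_on Y \<Phi>" "inj_on \<Phi> Y"
proof -
  obtain q :: "nat \<Rightarrow> 'a" where q: "Y \<subseteq> closure (range q)"
    using compact_imp_dense_sequence[OF assms] by blast
  have "continuous_on Y (\<lambda>y i. dist y (q i))"
    by (intro continuous_on_coordinatewise_then_product continuous_on_dist continuous_on_id
        continuous_on_const)
  moreover have "inj_on (\<lambda>y i. dist y (q i)) Y"
  proof (rule inj_onI)
    fix y y' assume "y \<in> Y" "y' \<in> Y" and eq: "(\<lambda>i. dist y (q i)) = (\<lambda>i. dist y' (q i))"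
    show "y = y'"
    proof (rule ccontr)
      assume "y \<noteq> y'"
      then have "dist y y' / 2 > 0"
        by simp
      then obtain i where i: "dist (q i) y < dist y y' / 2"
        using closure_approachable[THEN iffD1, OF subsetD[OF q \<open>y \<in> Y\<close>]] by blast
      have "dist y y' \<le> dist y (q i) + dist y' (q i)"
        by (rule dist_triangle2)
      then show False
        using i fun_cong[OF eq, of i] by (simp add: dist_commute)
    qed
  qed
  ultimately show ?thesis
    using that by blast
qed

lemma distal_system_recurrent_along:
  fixes R :: "nat set" and Y :: "'a::metric_space set"
  assumes hyp: "\<And>(X :: (nat \<Rightarrow> real) set) T x. minimal_distal_system X T \<Longrightarrow> x \<in> X \<Longrightarrow>
      (\<forall>e>0. \<exists>n\<in>R. dist ((T ^^ n) x) x < e)"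
    and distal: "distal_system Y U" and "y \<in> Y"
  shows "\<forall>e>0. \<exists>n\<in>R. dist ((U ^^ n) y) y < e"
proof (intro allI impI)
  fix e :: real assume "e > 0"
  have "compact Y" "U ` Y \<subseteq> Y"
    using distal by (simp_all add: distal_system_def is_system_iff)
  obtain \<Phi> :: "'a \<Rightarrow> nat \<Rightarrow> real" where "continuous_on Y \<Phi>" "inj_on \<Phi> Y"
    using compact_embeds_in_real_sequences[OF \<open>compact Y\<close>] .
  then obtain \<Psi> where hom: "homeomorphism Y (\<Phi> ` Y) \<Phi> \<Psi>"
    using homeomorphism_compact[OF \<open>compact Y\<close>] by blast
  define V where "V = \<Phi> \<circ> U \<circ> \<Psi>"
  have "distal_system (\<Phi> ` Y) V"
    unfolding V_def by (rule distal_system_conjugate[OF distal hom])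
  then have "minimal_distal_system (orbit_closure V (\<Phi> y)) V"
    using \<open>y \<in> Y\<close> by (simp add: minimal_distal_system_orbit_closure)
  then have recurrent: "\<forall>d>0. \<exists>n\<in>R. dist ((V ^^ n) (\<Phi> y)) (\<Phi> y) < d"
    by (rule hyp[OF _ self_in_orbit_closure])
  have orbit: "(V ^^ n) (\<Phi> y) = \<Phi> ((U ^^ n) y)" for n
    using funpow_semiconj[of Y \<Phi> U V, OF _ \<open>U ` Y \<subseteq> Y\<close> \<open>y \<in> Y\<close>] homeomorphism_apply1[OF hom]
    by (simp add: V_def)
  obtain d where "d > 0"
    and d: "\<forall>z\<in>\<Phi> ` Y. dist z (\<Phi> y) < d \<longrightarrow> dist (\<Psi> z) (\<Psi> (\<Phi> y)) < e"
    using homeomorphism_cont2[OF hom, unfolded continuous_on_iff, rule_format,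
        OF imageI[OF \<open>y \<in> Y\<close>] \<open>e > 0\<close>] by blast
  obtain n where "n \<in> R" "dist (\<Phi> ((U ^^ n) y)) (\<Phi> y) < d"
    using recurrent \<open>d > 0\<close> unfolding orbit by blast
  moreover have "(U ^^ n) y \<in> Y"
    using funpow_in_invariant[OF \<open>U ` Y \<subseteq> Y\<close> \<open>y \<in> Y\<close>] .
  ultimately show "\<exists>n\<in>R. dist ((U ^^ n) y) y < e"
    using d homeomorphism_apply1[OF hom] \<open>y \<in> Y\<close> by auto
qed

lemma recurrent_coordinates:
  fixes p :: "nat \<Rightarrow> 'i::countable \<Rightarrow> 'a::metric_space"
  assumes "\<forall>d>0. \<exists>n\<in>R. dist (p n) a < d" "finite J"
  shows "\<forall>e>0. \<exists>n\<in>R. \<forall>j\<in>J. dist (p n j) (a j) < e"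
proof (intro allI impI)
  fix e :: real assume "e > 0"
  have "continuous_on UNIV (\<lambda>f :: 'i \<Rightarrow> 'a. f j)" for j
    by simp
  then have "\<forall>\<^sub>F f in nhds a. dist (f j) (a j) < e" for j
    using \<open>e > 0\<close> unfolding continuous_on_iff eventually_nhds_metric by fastforce
  then have "\<forall>\<^sub>F f in nhds a. \<forall>j\<in>J. dist (f j) (a j) < e"
    using \<open>finite J\<close> by (intro eventually_ball_finite) auto
  then obtain d where "d > 0" "\<forall>f. dist f a < d \<longrightarrow> (\<forall>j\<in>J. dist (f j) (a j) < e)"
    unfolding eventually_nhds_metric by blast
  then show "\<exists>n\<in>R. \<forall>j\<in>J. dist (p n j) (a j) < e"
    using assms(1) by blast
qed

theorem mainTheorem5:
  fixes R :: "nat set"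
  assumes hyp: "\<And>(X :: (nat \<Rightarrow> real) set) T x. minimal_distal_system X T \<Longrightarrow> x \<in> X \<Longrightarrow>
                  (\<forall>e>0. \<exists>n\<in>R. dist ((T ^^ n) x) x < e)"
  shows "\<And>(X :: 'a::metric_space set) T x (l::nat). minimal_distal_system X T \<Longrightarrow> x \<in> X \<Longrightarrow> 1 \<le> l \<Longrightarrow>
           (\<forall>e>0. \<exists>n\<in>R. Max ((\<lambda>j. dist ((T ^^ (j * n)) x) x) ` {1..l}) < e)"
proof -
  fix X :: "'a set" and T x and l :: nat
  assume "minimal_distal_system X T" "x \<in> X" "1 \<le> l"
  define S :: "(nat \<Rightarrow> 'a) \<Rightarrow> nat \<Rightarrow> 'a" where "S = (\<lambda>f j. (T ^^ j) (f j))"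
  have "distal_system (PiE UNIV (\<lambda>_. X)) S"
    unfolding S_def using \<open>minimal_distal_system X T\<close>
    by (intro distal_system_PiE distal_system_funpow) (simp add: minimal_distal_system_def)
  moreover have "(\<lambda>_. x) \<in> PiE UNIV (\<lambda>_. X)"
    using \<open>x \<in> X\<close> by (simp add: PiE_iff)
  ultimately have "\<forall>d>0. \<exists>n\<in>R. dist ((S ^^ n) (\<lambda>_. x)) (\<lambda>_. x) < d"
    by (intro distal_system_recurrent_along[OF hyp])
  then have "\<forall>e>0. \<exists>n\<in>R. \<forall>j\<in>{1..l}. dist ((S ^^ n) (\<lambda>_. x) j) x < e"
    by (rule recurrent_coordinates) simp
  moreover have "(S ^^ n) (\<lambda>_. x) = (\<lambda>j. (T ^^ (j * n)) x)" for n
    by (induction n) (simp_all add: S_def funpow_add funpow_mult mult.commute)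
  ultimately have "\<forall>e>0. \<exists>n\<in>R. \<forall>j\<in>{1..l}. dist ((T ^^ (j * n)) x) x < e"
    by simp
  then show "\<forall>e>0. \<exists>n\<in>R. Max ((\<lambda>j. dist ((T ^^ (j * n)) x) x) ` {1..l}) < e"
    using \<open>1 \<le> l\<close> by (simp add: Max_less_iff)
qed

end
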